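(* Every centrally essential ring that is right semi-Artinian, and every centrally essential ring that is semiperfect, is right quasi-invariant.
   Context: All rings are associative, unital and non-zero. $Z(A)$ denotes the center of a ring $A$. A ring $A$ is centrally essential if either $A$ is commutative or for every non-central element $a\in A$ there exist non-zero central elements $x,y\in Z(A)$ with $ax=y$. A ring is right quasi-invariant if every maximal right ideal of it is a two-sided ideal. *)

theory Defs
  imports Main
begin

text \<open>Rings are modelled by the type class ring_1 (associative, unital, possibly
non-commutative; zero_neq_one gives that the ring is non-zero).
A ring-theoretic property of the ring is a predicate on the type, passed via itself.\<close>

definition center :: "'a::ring_1 itself \<Rightarrow> 'a set" where
  "center _ = {z. \<forall>a::'a. z * a = a * z}"

definition centrally_essential :: "'a::ring_1 itself \<Rightarrow> bool" where
  "centrally_essential T \<longleftrightarrow>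
     (\<forall>a b::'a. a * b = b * a) \<or>
     (\<forall>a::'a. a \<notin> center T \<longrightarrow>
        (\<exists>x\<in>center T. \<exists>y\<in>center T. x \<noteq> 0 \<and> y \<noteq> 0 \<and> a * x = y))"

definition right_ideal :: "'a::ring_1 set \<Rightarrow> bool" where
  "right_ideal I \<longleftrightarrow> 0 \<in> I \<and> (\<forall>x\<in>I. \<forall>y\<in>I. x + y \<in> I) \<and> (\<forall>x\<in>I. - x \<in> I)
     \<and> (\<forall>x\<in>I. \<forall>r. x * r \<in> I)"

definition left_ideal :: "'a::ring_1 set \<Rightarrow> bool" where
  "left_ideal I \<longleftrightarrow> 0 \<in> I \<and> (\<forall>x\<in>I. \<forall>y\<in>I. x + y \<in> I) \<and> (\<forall>x\<in>I. - x \<in> I)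
     \<and> (\<forall>x\<in>I. \<forall>r. r * x \<in> I)"

definition two_sided_ideal :: "'a::ring_1 set \<Rightarrow> bool" where
  "two_sided_ideal I \<longleftrightarrow> right_ideal I \<and> left_ideal I"

definition maximal_right_ideal :: "'a::ring_1 set \<Rightarrow> bool" where
  "maximal_right_ideal M \<longleftrightarrow> right_ideal M \<and> M \<noteq> UNIV \<and>
     (\<forall>I. right_ideal I \<and> M \<subseteq> I \<and> I \<noteq> UNIV \<longrightarrow> I = M)"

definition right_quasi_invariant :: "'a::ring_1 itself \<Rightarrow> bool" where
  "right_quasi_invariant _ \<longleftrightarrow> (\<forall>M::'a set. maximal_right_ideal M \<longrightarrow> two_sided_ideal M)"

text \<open>Right semi-Artinian: the module A_A is semi-Artinian, i.e. every non-zero factor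
module A/I (I a proper right ideal) has a simple submodule J/I, i.e. a right ideal
J strictly containing I with no right ideal strictly between I and J.\<close>

definition right_semi_artinian :: "'a::ring_1 itself \<Rightarrow> bool" where
  "right_semi_artinian _ \<longleftrightarrow>
     (\<forall>I::'a set. right_ideal I \<and> I \<noteq> UNIV \<longrightarrow>
        (\<exists>J. right_ideal J \<and> I \<subset> J \<and>
             (\<forall>K. right_ideal K \<and> I \<subseteq> K \<and> K \<subseteq> J \<longrightarrow> K = I \<or> K = J)))"

definition jacobson_radical :: "'a::ring_1 itself \<Rightarrow> 'a set" where
  "jacobson_radical _ = \<Inter>{M::'a set. maximal_right_ideal M}"

text \<open>Semiperfect (Lam): A/J(A) is semisimple and idempotents lift modulo J(A).
A/J semisimple: every right ideal of A/J is a direct summand; right ideals of A/J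
correspond to right ideals of A containing J.\<close>

definition semiperfect :: "'a::ring_1 itself \<Rightarrow> bool" where
  "semiperfect T \<longleftrightarrow>
     (let J = jacobson_radical T in
       (\<forall>I::'a set. right_ideal I \<and> J \<subseteq> I \<longrightarrow>
          (\<exists>K. right_ideal K \<and> J \<subseteq> K \<and> I \<inter> K = J \<and> {x + y |x y. x \<in> I \<and> y \<in> K} = UNIV))
       \<and> (\<forall>a::'a. a * a - a \<in> J \<longrightarrow> (\<exists>e. e * e = e \<and> e - a \<in> J)))"

end

theory Submission
  imports Defs
begin

text \<open>
In a centrally essential ring every idempotent f is central: a non-zero element of f A (1 - f)
would have a non-zero central multiple that is both killed and fixed by f.

Semiperfect case: a maximal right ideal M has a complement modulo the Jacobson radical J;
lifting the idempotent it defines gives a central idempotent e with 1 - e in M and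
e M \<subseteq> J, and then A M = A M e + A M (1 - e) \<subseteq> M.

Right semi-Artinian case: J is right T-nilpotent, so idempotents lift modulo J. If n^2 \<in> J but
n \<notin> J, the annihilator of n modulo J is covered by some L, and then J + n L covers J; such a
simple module contains an idempotent modulo J, whose central lift f satisfies f \<in> J + n L and
f n \<in> J, forcing f \<in> J. So J is completely semiprime. Now let P be the largest two-sided ideal
in a maximal right ideal M; P is prime, and Q = {b. b s \<in> J for some s \<notin> P} is a completely
semiprime two-sided ideal inside M that is cancellative with respect to P. Using
semi-Artinianity once more, a right ideal covering Q must contain 1, so M = Q is two-sided.
\<close>

lemma right_ideal_zero: "right_ideal I \<Longrightarrow> 0 \<in> I"
  by (simp add: right_ideal_def)

lemma right_ideal_add: "right_ideal I \<Longrightarrow> x \<in> I \<Longrightarrow> y \<in> I \<Longrightarrow> x + y \<in> I"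
  by (simp add: right_ideal_def)

lemma right_ideal_uminus: "right_ideal I \<Longrightarrow> x \<in> I \<Longrightarrow> - x \<in> I"
  by (simp add: right_ideal_def)

lemma right_ideal_mult: "right_ideal I \<Longrightarrow> x \<in> I \<Longrightarrow> x * r \<in> I"
  by (simp add: right_ideal_def)

lemma right_ideal_diff: "right_ideal I \<Longrightarrow> x \<in> I \<Longrightarrow> y \<in> I \<Longrightarrow> x - y \<in> I"
  by (metis diff_conv_add_uminus right_ideal_add right_ideal_uminus)

lemma right_ideal_UNIV: "right_ideal (UNIV :: 'a::ring_1 set)"
  by (simp add: right_ideal_def)

lemma right_ideal_eq_UNIV_if_one: "right_ideal I \<Longrightarrow> (1::'a::ring_1) \<in> I \<Longrightarrow> I = UNIV"
  using right_ideal_mult[of I 1] by auto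

lemma right_ideal_Int: "right_ideal A \<Longrightarrow> right_ideal B \<Longrightarrow> right_ideal (A \<inter> B)"
  by (simp add: right_ideal_def)

lemma right_ideal_Inter: "(\<And>I. I \<in> S \<Longrightarrow> right_ideal I) \<Longrightarrow> right_ideal (\<Inter>S)"
  by (simp add: right_ideal_def)

lemma right_ideal_colon: "right_ideal K \<Longrightarrow> right_ideal {a. u * a \<in> K}"
  by (simp add: right_ideal_def distrib_left flip: mult.assoc)

lemma two_sided_ideal_right_ideal: "two_sided_ideal I \<Longrightarrow> right_ideal I"
  by (simp add: two_sided_ideal_def)

lemma two_sided_ideal_left_mult: "two_sided_ideal I \<Longrightarrow> x \<in> I \<Longrightarrow> r * x \<in> I"
  by (simp add: two_sided_ideal_def left_ideal_def)

lemma two_sided_idealI: "right_ideal I \<Longrightarrow> (\<And>r x. x \<in> I \<Longrightarrow> r * x \<in> I) \<Longrightarrow> two_sided_ideal I"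
  by (simp add: two_sided_ideal_def left_ideal_def right_ideal_def)

definition plus_mult :: "'a::ring_1 set \<Rightarrow> 'a \<Rightarrow> 'a set \<Rightarrow> 'a set" where
  "plus_mult K u I = {k + u * a |k a. k \<in> K \<and> a \<in> I}"

lemma plus_multI: "k \<in> K \<Longrightarrow> a \<in> I \<Longrightarrow> x = k + u * a \<Longrightarrow> x \<in> plus_mult K u I"
  unfolding plus_mult_def by blast

lemma plus_multE:
  assumes "x \<in> plus_mult K u I"
  obtains k a where "k \<in> K" "a \<in> I" "x = k + u * a"
  using assms unfolding plus_mult_def by blast

lemma right_ideal_plus_mult:
  assumes K: "right_ideal K" and I: "right_ideal I"
  shows "right_ideal (plus_mult K u I)"
  unfolding right_ideal_def
proof (intro conjI ballI allI)
  show "0 \<in> plus_mult K u I"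
    using K I by (intro plus_multI[of 0 _ 0]) (simp_all add: right_ideal_zero)
next
  fix x y assume "x \<in> plus_mult K u I" "y \<in> plus_mult K u I"
  then obtain k a k' a' where "k \<in> K" "a \<in> I" "x = k + u * a" "k' \<in> K" "a' \<in> I" "y = k' + u * a'"
    by (elim plus_multE)
  then show "x + y \<in> plus_mult K u I"
    using K I
    by (intro plus_multI[of "k + k'" _ "a + a'"]) (simp_all add: right_ideal_add algebra_simps)
next
  fix x assume "x \<in> plus_mult K u I"
  then obtain k a where "k \<in> K" "a \<in> I" "x = k + u * a" by (elim plus_multE)
  then show "- x \<in> plus_mult K u I"
    using K I by (intro plus_multI[of "- k" _ "- a"]) (simp_all add: right_ideal_uminus)
next
  fix x r assume "x \<in> plus_mult K u I"
  then obtain k a where "k \<in> K" "a \<in> I" "x = k + u * a" by (elim plus_multE)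
  then show "x * r \<in> plus_mult K u I"
    using K I
    by (intro plus_multI[of "k * r" _ "a * r"]) (simp_all add: right_ideal_mult algebra_simps)
qed

lemma subset_plus_mult: "right_ideal I \<Longrightarrow> K \<subseteq> plus_mult K u I"
  by (auto intro: plus_multI[of _ _ 0] right_ideal_zero)

lemma mult_mem_plus_mult: "right_ideal K \<Longrightarrow> a \<in> I \<Longrightarrow> u * a \<in> plus_mult K u I"
  by (auto intro: plus_multI[of 0] right_ideal_zero)

lemma plus_mult_subset:
  "right_ideal L \<Longrightarrow> K \<subseteq> L \<Longrightarrow> (\<And>a. a \<in> I \<Longrightarrow> u * a \<in> L) \<Longrightarrow> plus_mult K u I \<subseteq> L"
  by (auto elim!: plus_multE intro: right_ideal_add)

text \<open>covers K L: the right ideal L contains K and L/K is a simple module.\<close>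

definition covers :: "'a::ring_1 set \<Rightarrow> 'a set \<Rightarrow> bool" where
  "covers K L \<longleftrightarrow> right_ideal L \<and> K \<subset> L \<and>
     (\<forall>X. right_ideal X \<and> K \<subseteq> X \<and> X \<subseteq> L \<longrightarrow> X = K \<or> X = L)"

lemma covers_cases: "covers K L \<Longrightarrow> right_ideal X \<Longrightarrow> K \<subseteq> X \<Longrightarrow> X \<subseteq> L \<Longrightarrow> X = K \<or> X = L"
  unfolding covers_def by blast

lemma right_semi_artinian_covers:
  "right_semi_artinian TYPE('a::ring_1) \<Longrightarrow> right_ideal (I::'a set) \<Longrightarrow> I \<noteq> UNIV \<Longrightarrow> \<exists>L. covers I L"
  unfolding right_semi_artinian_def covers_def by blast

lemma maximal_right_ideal_covers_UNIV: "maximal_right_ideal M \<Longrightarrow> covers M UNIV"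
  unfolding maximal_right_ideal_def covers_def using right_ideal_UNIV by blast

lemma covers_plus_mult_eq:
  assumes K: "right_ideal K" and KL: "covers K L" and I: "right_ideal I"
    and uI: "\<And>a. a \<in> I \<Longrightarrow> u * a \<in> L" and a: "a \<in> I" "u * a \<notin> K"
  shows "plus_mult K u I = L"
proof -
  have "K \<subseteq> L" and L: "right_ideal L" using KL unfolding covers_def by auto
  then have "plus_mult K u I \<subseteq> L" using plus_mult_subset uI by blast
  moreover have "plus_mult K u I \<noteq> K" using mult_mem_plus_mult[OF K a(1)] a(2) by blast
  ultimately show ?thesis
    using covers_cases[OF KL right_ideal_plus_mult[OF K I] subset_plus_mult[OF I]] by blast
qed

lemma maximal_right_ideal_comaximal:
  assumes M: "maximal_right_ideal M" and x: "x \<notin> M"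
  shows "\<exists>m\<in>M. \<exists>r. m + x * r = 1"
proof -
  have "right_ideal M" using M by (simp add: maximal_right_ideal_def)
  then have "plus_mult M x UNIV = UNIV"
    using covers_plus_mult_eq[OF _ maximal_right_ideal_covers_UNIV[OF M] right_ideal_UNIV, of x 1] x
    by simp
  then show ?thesis by (metis UNIV_I plus_multE)
qed

lemma maximal_right_ideal_colon:
  assumes K: "right_ideal K" and KL: "covers K L" and u: "u \<in> L" "u \<notin> K"
  shows "maximal_right_ideal {a. u * a \<in> K}"
  unfolding maximal_right_ideal_def
proof (intro conjI allI impI)
  show "right_ideal {a. u * a \<in> K}" using K by (rule right_ideal_colon)
  show "{a. u * a \<in> K} \<noteq> UNIV" using u by (metis UNIV_I mem_Collect_eq mult_1_right)
  fix I assume I: "right_ideal I \<and> {a. u * a \<in> K} \<subseteq> I \<and> I \<noteq> UNIV"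
  show "I = {a. u * a \<in> K}"
  proof (rule ccontr)
    assume "I \<noteq> {a. u * a \<in> K}"
    then obtain x where x: "x \<in> I" "u * x \<notin> K" using I by blast
    have L: "right_ideal L" using KL by (simp add: covers_def)
    have "plus_mult K u I = L"
      using covers_plus_mult_eq[OF K KL _ _ x] I right_ideal_mult[OF L u(1)] by blast
    then obtain k a where ka: "u = k + u * a" "k \<in> K" "a \<in> I"
      using u(1) by (metis plus_multE)
    then have "u * (1 - a) = k" by (simp add: algebra_simps)
    then have "u * (1 - a) \<in> K" using ka(2) by simp
    then have "1 - a \<in> I" using I by blast
    then have "1 \<in> I" using right_ideal_add[of I "1 - a" a] I ka by simp
    then show False using I right_ideal_eq_UNIV_if_one by blast
  qed
qed

lemma jacobson_radical_subset:
  "maximal_right_ideal M \<Longrightarrow> jacobson_radical TYPE('a::ring_1) \<subseteq> (M::'a set)"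
  unfolding jacobson_radical_def by blast

lemma jacobson_radicalI:
  "(\<And>M. maximal_right_ideal (M::'a::ring_1 set) \<Longrightarrow> x \<in> M) \<Longrightarrow> x \<in> jacobson_radical TYPE('a)"
  unfolding jacobson_radical_def by blast

lemma two_sided_ideal_jacobson_radical: "two_sided_ideal (jacobson_radical TYPE('a::ring_1))"
proof (rule two_sided_idealI)
  show "right_ideal (jacobson_radical TYPE('a))"
    unfolding jacobson_radical_def by (rule right_ideal_Inter) (simp add: maximal_right_ideal_def)
next
  fix r x :: 'a assume x: "x \<in> jacobson_radical TYPE('a)"
  show "r * x \<in> jacobson_radical TYPE('a)"
  proof (rule jacobson_radicalI)
    fix M :: "'a set" assume M: "maximal_right_ideal M"
    then have M_ideal: "right_ideal M" by (simp add: maximal_right_ideal_def)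
    show "r * x \<in> M"
    proof (cases "r \<in> M")
      case True
      then show ?thesis using M_ideal right_ideal_mult by blast
    next
      case False
      have "maximal_right_ideal {a. r * a \<in> M}"
        using maximal_right_ideal_colon[OF M_ideal maximal_right_ideal_covers_UNIV[OF M]] False
        by blast
      then show ?thesis using x jacobson_radical_subset by blast
    qed
  qed
qed

lemmas right_ideal_jacobson_radical =
  two_sided_ideal_right_ideal[OF two_sided_ideal_jacobson_radical]

lemma right_ideal_subset_jacobson_radical:
  assumes L: "right_ideal L"
    and LL: "\<And>a b. a \<in> L \<Longrightarrow> b \<in> L \<Longrightarrow> a * b \<in> jacobson_radical TYPE('a::ring_1)"
  shows "L \<subseteq> jacobson_radical TYPE('a)"
proof (intro subsetI jacobson_radicalI)
  fix l and M :: "'a set" assume l: "l \<in> L" and M: "maximal_right_ideal M"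
  then have M_ideal: "right_ideal M" by (simp add: maximal_right_ideal_def)
  show "l \<in> M"
  proof (rule ccontr)
    assume "l \<notin> M"
    then obtain m r where mr: "m \<in> M" "m + l * r = 1"
      using maximal_right_ideal_comaximal[OF M] by blast
    have "l = (m + l * r) * l" using mr(2) by simp
    then have "l = m * l + (l * r) * l" by (simp add: distrib_right)
    moreover have "(l * r) * l \<in> M"
      using LL[OF right_ideal_mult[OF L l] l] jacobson_radical_subset[OF M] by blast
    ultimately have "l \<in> M" using right_ideal_add[OF M_ideal right_ideal_mult[OF M_ideal mr(1)]]
      by metis
    then show False using \<open>l \<notin> M\<close> by simp
  qed
qed

section \<open>Central idempotents and semiperfect rings\<close>

lemma centrally_essential_idempotent_corner_eq_0:
  assumes ce: "centrally_essential TYPE('a::ring_1)"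
    and f: "f * f = (f::'a)" and tf: "t * f = 0" and ft: "f * t = t"
  shows "t = 0"
proof -
  have central: "z * a = a * z" if "z \<in> center TYPE('a)" for z a
    using that by (simp add: center_def)
  show ?thesis
  proof (cases "t \<in> center TYPE('a) \<or> (\<forall>a b::'a. a * b = b * a)")
    case True
    then have "t * f = f * t" by (auto simp: center_def)
    then show ?thesis using tf ft by simp
  next
    case False
    then obtain x y where xy: "x \<in> center TYPE('a)" "y \<in> center TYPE('a)" "y \<noteq> 0" "t * x = y"
      using ce unfolding centrally_essential_def by blast
    have "y * f = t * (f * x)"
      unfolding xy(4)[symmetric] using central[OF xy(1), of f] by (simp add: mult.assoc)
    also have "\<dots> = 0" using tf by (simp flip: mult.assoc)
    finally have "y * f = 0" .
    moreover have "f * y = y" unfolding xy(4)[symmetric] by (simp add: ft flip: mult.assoc)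
    ultimately have "y = 0" using central[OF xy(2), of f] by simp
    with xy(3) show ?thesis by simp
  qed
qed

lemma centrally_essential_idempotent_central:
  assumes ce: "centrally_essential TYPE('a::ring_1)" and f: "f * f = (f::'a)"
  shows "f * a = a * f"
proof -
  have ff: "f * (f * x) = f * x" for x by (simp add: f flip: mult.assoc)
  have f': "(1 - f) * (1 - f) = 1 - f" using f by (simp add: algebra_simps)
  have "f * a * (1 - f) = 0"
    by (rule centrally_essential_idempotent_corner_eq_0[OF ce f]) (simp_all add: algebra_simps f ff)
  moreover have "(1 - f) * a * f = 0"
    by (rule centrally_essential_idempotent_corner_eq_0[OF ce f']) (simp_all add: algebra_simps f ff)
  ultimately show ?thesis by (simp add: algebra_simps f ff)
qed

lemma semiperfect_maximal_right_ideal_idempotent: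
  assumes sp: "semiperfect TYPE('a::ring_1)" and M: "maximal_right_ideal (M::'a set)"
  shows "\<exists>e. e * e = e \<and> 1 - e \<in> M \<and> (\<forall>a. e * a \<in> M \<longrightarrow> e * a \<in> jacobson_radical TYPE('a))"
proof -
  let ?J = "jacobson_radical TYPE('a)"
  have JM: "?J \<subseteq> M" using M by (rule jacobson_radical_subset)
  have M_ideal: "right_ideal M" using M by (simp add: maximal_right_ideal_def)
  obtain K where K: "right_ideal K" "?J \<subseteq> K" "M \<inter> K = ?J" "{x + y |x y. x \<in> M \<and> y \<in> K} = UNIV"
    using sp M_ideal JM unfolding semiperfect_def Let_def by blast
  have "1 \<in> {x + y |x y. x \<in> M \<and> y \<in> K}" using K(4) by simp
  then obtain m k where mk: "m \<in> M" "k \<in> K" "m + k = 1" by auto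
  then have k: "k = 1 - m" by (simp add: eq_diff_eq add.commute)
  have "k * m = m - m * m" unfolding k by (simp add: algebra_simps)
  then have "k * m \<in> M \<inter> K"
    using right_ideal_mult[OF K(1) mk(2), of m]
      right_ideal_diff[OF M_ideal mk(1) right_ideal_mult[OF M_ideal mk(1)]]
    by auto
  moreover have "k * k - k = - (k * m)" unfolding k by (simp add: algebra_simps)
  ultimately have "k * k - k \<in> ?J"
    using K(3) right_ideal_uminus[OF right_ideal_jacobson_radical] by auto
  then obtain e where e: "e * e = e" "e - k \<in> ?J"
    using sp unfolding semiperfect_def Let_def by blast
  have "e \<in> K" using right_ideal_add[OF K(1) mk(2), of "e - k"] e(2) K(2) by auto
  moreover have "1 - e \<in> M"
  proof -
    have "1 - e = m - (e - k)" by (simp add: k)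
    moreover have "m - (e - k) \<in> M" using right_ideal_diff[OF M_ideal mk(1)] e(2) JM by blast
    ultimately show ?thesis by (simp only:)
  qed
  ultimately show ?thesis using e(1) K(3) right_ideal_mult[OF K(1)] by blast
qed

lemma semiperfect_maximal_right_ideal_two_sided:
  assumes central: "\<And>e a::'a::ring_1. e * e = e \<Longrightarrow> e * a = a * e"
    and sp: "semiperfect TYPE('a)" and M: "maximal_right_ideal (M::'a set)"
  shows "two_sided_ideal M"
proof -
  have M_ideal: "right_ideal M" using M by (simp add: maximal_right_ideal_def)
  obtain e where e: "e * e = e" "1 - e \<in> M" "\<And>a. e * a \<in> M \<Longrightarrow> e * a \<in> jacobson_radical TYPE('a)"
    using semiperfect_maximal_right_ideal_idempotent[OF sp M] by blast
  show ?thesis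
  proof (rule two_sided_idealI[OF M_ideal])
    fix r x assume x: "x \<in> M"
    have "e * x \<in> M" using right_ideal_mult[OF M_ideal x, of e] central[OF e(1), of x] by simp
    then have "r * (e * x) \<in> M"
      using e(3) two_sided_ideal_left_mult[OF two_sided_ideal_jacobson_radical]
        jacobson_radical_subset[OF M] by blast
    then have "r * x * e \<in> M" using central[OF e(1), of x] by (simp add: mult.assoc)
    moreover have "r * x * (1 - e) \<in> M"
    proof -
      have "r * x * (1 - e) = (1 - e) * (r * x)"
        using central[OF e(1), of "r * x"] by (simp add: algebra_simps)
      then show ?thesis using right_ideal_mult[OF M_ideal e(2)] by simp
    qed
    moreover have "r * x = r * x * e + r * x * (1 - e)" by (simp add: algebra_simps)
    ultimately show "r * x \<in> M" using right_ideal_add[OF M_ideal] by metis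
  qed
qed

definition completely_semiprime :: "'a::ring_1 set \<Rightarrow> bool" where
  "completely_semiprime I \<longleftrightarrow> (\<forall>a. a * a \<in> I \<longrightarrow> a \<in> I)"

lemma completely_semiprimeD: "a * a \<in> I \<Longrightarrow> completely_semiprime I \<Longrightarrow> a \<in> I"
  unfolding completely_semiprime_def by blast

lemma completely_semiprime_mult_commute:
  assumes I: "two_sided_ideal I" and cs: "completely_semiprime I" and xy: "x * y \<in> I"
  shows "y * x \<in> I"
proof -
  have "y * (x * y) * x \<in> I"
    using right_ideal_mult[OF two_sided_ideal_right_ideal[OF I] two_sided_ideal_left_mult[OF I xy]] .
  then have "(y * x) * (y * x) \<in> I" by (simp add: mult.assoc)
  then show ?thesis using cs by (rule completely_semiprimeD)
qed

lemma completely_semiprime_mult_insert: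
  assumes I: "two_sided_ideal I" and cs: "completely_semiprime I" and xy: "x * y \<in> I"
  shows "x * r * y \<in> I"
proof -
  have "y * x \<in> I" by (rule completely_semiprime_mult_commute[OF I cs xy])
  then have "x * r * (y * x) * (r * y) \<in> I"
    using right_ideal_mult[OF two_sided_ideal_right_ideal[OF I] two_sided_ideal_left_mult[OF I]]
    by blast
  then have "(x * r * y) * (x * r * y) \<in> I" by (simp add: mult.assoc)
  then show ?thesis using cs by (rule completely_semiprimeD)
qed

section \<open>Right semi-Artinian rings\<close>

lemma power_mult_distrib_commuting:
  fixes a b :: "'a::monoid_mult"
  assumes "a * b = b * a"
  shows "(a * b) ^ n = a ^ n * b ^ n"
proof (induction n)
  case 0
  then show ?case by simp
next
  case (Suc n)
  have "b * a ^ n = a ^ n * b" using power_commuting_commutes[OF assms, of n] by simp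
  have "(a * b) ^ Suc n = a * (b * a ^ n) * b ^ n" by (simp add: Suc mult.assoc)
  also have "\<dots> = a ^ Suc n * b ^ Suc n" by (simp add: \<open>b * a ^ n = a ^ n * b\<close> mult.assoc)
  finally show ?case .
qed

text \<open>The step x \<mapsto> 3 x^2 - 2 x^3 moves x by a multiple of d = x^2 - x and replaces d by
d^2 (4 x^2 - 4 x - 3), whose factors commute. Numerals are expanded into sums of ones so that
algebra_simps can normalise these one-variable identities without commutativity.\<close>

lemma idempotent_lift:
  fixes x :: "'a::ring_1"
  assumes I: "two_sided_ideal I" and x: "x * x - x \<in> I" and nil: "(x * x - x) ^ 2 ^ N = 0"
  shows "\<exists>f. f * f = f \<and> f - x \<in> I"
  using x nil
proof (induction N arbitrary: x)
  case 0
  then show ?case using right_ideal_zero[OF two_sided_ideal_right_ideal[OF I]] by auto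
next
  case (Suc N)
  define d where "d = x * x - x"
  define h where "h = x * x * (3 - 2 * x)"
  define c where "c = 4 * x * x - 4 * x - 3"
  have h_x: "h - x = d * (1 - 2 * x)"
    unfolding h_def d_def by (simp add: algebra_simps numeral_Bit0 numeral_Bit1 del: one_add_one)
  have h_h: "h * h - h = d * d * c"
    unfolding h_def d_def c_def
      by (simp add: algebra_simps numeral_Bit0 numeral_Bit1 del: one_add_one)
  have dc: "d * c = c * d"
    unfolding d_def c_def by (simp add: algebra_simps numeral_Bit0 numeral_Bit1 del: one_add_one)
  have d: "d \<in> I" using Suc.prems(1) by (simp add: d_def)
  have "h * h - h \<in> I"
    unfolding h_h using d I by (simp add: two_sided_ideal_right_ideal right_ideal_mult)
  moreover have "(h * h - h) ^ 2 ^ N = 0"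
  proof -
    have "d * d * c = c * (d * d)" by (metis dc mult.assoc)
    then have "(d * d * c) ^ 2 ^ N = (d * d) ^ 2 ^ N * c ^ 2 ^ N"
      by (rule power_mult_distrib_commuting)
    also have "(d * d) ^ 2 ^ N = d ^ 2 ^ Suc N"
      by (simp add: power_mult power2_eq_square flip: power_mult_distrib_commuting)
    finally show ?thesis unfolding h_h using Suc.prems(2) by (simp add: d_def)
  qed
  ultimately obtain f where f: "f * f = f" "f - h \<in> I" using Suc.IH by blast
  have "h - x \<in> I"
    unfolding h_x using d I by (simp add: two_sided_ideal_right_ideal right_ideal_mult)
  then have "(f - h) + (h - x) \<in> I"
    using right_ideal_add[OF two_sided_ideal_right_ideal[OF I] f(2)] by blast
  then show ?case using f(1) by auto
qed

text \<open>S is right T-nilpotent iff 1 \<in> T_annihilator S.\<close>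

definition T_annihilator :: "'a::ring_1 set \<Rightarrow> 'a set" where
  "T_annihilator S = {b. \<forall>f :: nat \<Rightarrow> 'a. range f \<subseteq> S \<longrightarrow> (\<exists>n. b * prod_list (map f [0..<n]) = 0)}"

lemma prod_list_map_upt_Suc_left:
  fixes f :: "nat \<Rightarrow> 'a::monoid_mult"
  shows "prod_list (map f [0..<Suc n]) = f 0 * prod_list (map (\<lambda>i. f (Suc i)) [0..<n])"
  by (simp add: upt_conv_Cons map_Suc_upt[symmetric] comp_def del: upt_Suc)

lemma mult_prod_list_map_upt_eq_0:
  fixes f :: "nat \<Rightarrow> 'a::ring_1"
  assumes "b * prod_list (map f [0..<n]) = 0" and "n \<le> m"
  shows "b * prod_list (map f [0..<m]) = 0"
proof -
  have "[0..<m] = [0..<n] @ [n..<m]" using assms(2) upt_add_eq_append[of 0 n "m - n"] by simp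
  then show ?thesis using assms(1) by (simp add: mult.assoc[symmetric])
qed

lemma right_ideal_T_annihilator:
  assumes S: "\<And>r x. x \<in> S \<Longrightarrow> r * x \<in> S"
  shows "right_ideal (T_annihilator S)"
  unfolding right_ideal_def
proof (intro conjI ballI allI)
  show "0 \<in> T_annihilator S" unfolding T_annihilator_def by simp
next
  fix x y assume "x \<in> T_annihilator S" "y \<in> T_annihilator S"
  show "x + y \<in> T_annihilator S" unfolding T_annihilator_def
  proof (intro CollectI allI impI)
    fix f :: "nat \<Rightarrow> 'a" assume f: "range f \<subseteq> S"
    obtain n m where "x * prod_list (map f [0..<n]) = 0" "y * prod_list (map f [0..<m]) = 0"
      using \<open>x \<in> T_annihilator S\<close> \<open>y \<in> T_annihilator S\<close> f unfolding T_annihilator_def by blast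
    then have "x * prod_list (map f [0..<max n m]) = 0" "y * prod_list (map f [0..<max n m]) = 0"
      by (simp_all add: mult_prod_list_map_upt_eq_0)
    then show "\<exists>n. (x + y) * prod_list (map f [0..<n]) = 0"
      by (intro exI[of _ "max n m"]) (simp add: distrib_right)
  qed
next
  fix x assume "x \<in> T_annihilator S"
  then show "- x \<in> T_annihilator S" unfolding T_annihilator_def by simp
next
  fix x r assume x: "x \<in> T_annihilator S"
  show "x * r \<in> T_annihilator S" unfolding T_annihilator_def
  proof (intro CollectI allI impI)
    fix f :: "nat \<Rightarrow> 'a" assume f: "range f \<subseteq> S"
    define g where "g i = (if i = 0 then r * f 0 else f i)" for i
    have "range g \<subseteq> S" using f S unfolding g_def by auto
    then obtain n where "x * prod_list (map g [0..<n]) = 0"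
      using x unfolding T_annihilator_def by blast
    then have "x * prod_list (map g [0..<Suc n]) = 0"
      by (rule mult_prod_list_map_upt_eq_0) simp
    then have "x * r * prod_list (map f [0..<Suc n]) = 0"
      by (simp only: prod_list_map_upt_Suc_left g_def mult.assoc) (simp add: mult.assoc)
    then show "\<exists>n. x * r * prod_list (map f [0..<n]) = 0" by blast
  qed
qed

text \<open>If K = T_annihilator J were proper, a right ideal L covering K and u \<in> L - K would give
u J \<subseteq> K (the annihilator of u modulo K is maximal), which puts u into K.\<close>

lemma right_semi_artinian_T_annihilator_jacobson_radical:
  assumes sa: "right_semi_artinian TYPE('a::ring_1)"
  shows "T_annihilator (jacobson_radical TYPE('a)) = UNIV"
proof (rule ccontr)
  let ?J = "jacobson_radical TYPE('a)" and ?K = "T_annihilator (jacobson_radical TYPE('a))"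
  have K: "right_ideal ?K"
    by (rule right_ideal_T_annihilator)
      (rule two_sided_ideal_left_mult[OF two_sided_ideal_jacobson_radical])
  assume "?K \<noteq> UNIV"
  then obtain L where L: "covers ?K L" using right_semi_artinian_covers[OF sa K] by blast
  then obtain u where u: "u \<in> L" "u \<notin> ?K" unfolding covers_def by blast
  have "?J \<subseteq> {a. u * a \<in> ?K}"
    using jacobson_radical_subset maximal_right_ideal_colon[OF K L u] by blast
  then have "u \<in> ?K" unfolding T_annihilator_def
  proof (intro CollectI allI impI)
    fix f :: "nat \<Rightarrow> 'a" assume f: "range f \<subseteq> ?J"
    then have "u * f 0 \<in> ?K" using \<open>?J \<subseteq> {a. u * a \<in> ?K}\<close> by blast
    moreover have "range (\<lambda>i. f (Suc i)) \<subseteq> ?J" using f by auto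
    ultimately obtain n where "u * f 0 * prod_list (map (\<lambda>i. f (Suc i)) [0..<n]) = 0"
      unfolding T_annihilator_def by blast
    then have "u * prod_list (map f [0..<Suc n]) = 0"
      by (simp only: prod_list_map_upt_Suc_left mult.assoc)
    then show "\<exists>n. u * prod_list (map f [0..<n]) = 0" by blast
  qed
  with u show False by blast
qed

lemma right_semi_artinian_jacobson_radical_nil:
  assumes sa: "right_semi_artinian TYPE('a::ring_1)" and j: "j \<in> jacobson_radical TYPE('a)"
  shows "\<exists>n. j ^ n = 0"
proof -
  have "1 \<in> T_annihilator (jacobson_radical TYPE('a))"
    using right_semi_artinian_T_annihilator_jacobson_radical[OF sa] by simp
  then obtain n where "prod_list (map (\<lambda>_. j) [0..<n]) = 0"
    using j unfolding T_annihilator_def by force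
  then show ?thesis by (auto simp: map_replicate_const prod_list_replicate)
qed

lemma right_semi_artinian_lift_idempotent:
  assumes sa: "right_semi_artinian TYPE('a::ring_1)"
    and e: "(e::'a) * e - e \<in> jacobson_radical TYPE('a)"
  shows "\<exists>f. f * f = f \<and> f - e \<in> jacobson_radical TYPE('a)"
proof -
  obtain n where n: "(e * e - e) ^ n = 0" using right_semi_artinian_jacobson_radical_nil[OF sa e]
    by blast
  have "2 ^ n = n + (2 ^ n - n)" using less_exp[of n] by simp
  then have "(e * e - e) ^ 2 ^ n = 0" by (metis n power_add mult_zero_left)
  then show ?thesis by (rule idempotent_lift[OF two_sided_ideal_jacobson_radical e])
qed

text \<open>Left multiplication by u induces L / {a. u a \<in> K} \<cong> (K + u L) / K.\<close>

lemma covers_plus_mult_colon: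
  assumes K: "right_ideal K" and IL: "covers {a. u * a \<in> K} L"
  shows "covers K (plus_mult K u L)"
  unfolding covers_def
proof (intro conjI allI impI)
  have L: "right_ideal L" and sub: "{a. u * a \<in> K} \<subset> L" using IL by (auto simp: covers_def)
  show "right_ideal (plus_mult K u L)" by (rule right_ideal_plus_mult[OF K L])
  obtain l where "l \<in> L" "u * l \<notin> K" using sub by blast
  then show "K \<subset> plus_mult K u L" using subset_plus_mult[OF L] mult_mem_plus_mult[OF K] by blast
  fix X assume X: "right_ideal X \<and> K \<subseteq> X \<and> X \<subseteq> plus_mult K u L"
  have "right_ideal (L \<inter> {a. u * a \<in> X})" using X L by (simp add: right_ideal_Int right_ideal_colon)
  moreover have "{a. u * a \<in> K} \<subseteq> L \<inter> {a. u * a \<in> X}" using sub X by blast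
  ultimately have "L \<inter> {a. u * a \<in> X} = {a. u * a \<in> K} \<or> L \<inter> {a. u * a \<in> X} = L"
    using covers_cases[OF IL] by blast
  then show "X = K \<or> X = plus_mult K u L"
  proof
    assume Y: "L \<inter> {a. u * a \<in> X} = {a. u * a \<in> K}"
    have "X \<subseteq> K"
    proof
      fix x assume x: "x \<in> X"
      then obtain k a where ka: "k \<in> K" "a \<in> L" "x = k + u * a" using X by (blast elim: plus_multE)
      then have "u * a = x - k" by simp
      then have "u * a \<in> X" using right_ideal_diff[of X x k] X x ka(1) by auto
      then have "u * a \<in> K" using Y ka(2) by blast
      then show "x \<in> K" using right_ideal_add[OF K ka(1)] ka(3) by simp
    qed
    then show ?thesis using X by blast
  next
    assume "L \<inter> {a. u * a \<in> X} = L"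
    then have "plus_mult K u L \<subseteq> X" using X plus_mult_subset[of X K L u] by blast
    then show ?thesis using X by blast
  qed
qed

text \<open>As L is not square-zero modulo J, some a \<in> L has a L + J = L, so a = j + a e with e \<in> L;
the annihilator of a in L/J is trivial, hence e is idempotent modulo J.\<close>

lemma covers_jacobson_radical_idempotent_mod:
  assumes JL: "covers (jacobson_radical TYPE('a::ring_1)) L"
  shows "\<exists>e\<in>L. e * e - e \<in> jacobson_radical TYPE('a) \<and> e \<notin> jacobson_radical TYPE('a)"
proof -
  let ?J = "jacobson_radical TYPE('a)"
  have L: "right_ideal L" and JL_sub: "?J \<subset> L" using JL by (auto simp: covers_def)
  obtain a b where ab: "a \<in> L" "b \<in> L" "a * b \<notin> ?J"
    using right_ideal_subset_jacobson_radical[OF L] JL_sub by blast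
  have "plus_mult ?J a L = L"
    using covers_plus_mult_eq[OF right_ideal_jacobson_radical JL L _ ab(2,3)] right_ideal_mult[OF L ab(1)]
    by blast
  then obtain j e where je: "j \<in> ?J" "e \<in> L" "a = j + a * e"
    using ab(1) by (metis plus_multE)
  have "L \<inter> {x. a * x \<in> ?J} = ?J"
  proof -
    have "right_ideal (L \<inter> {x. a * x \<in> ?J})"
      by (intro right_ideal_Int right_ideal_colon L right_ideal_jacobson_radical)
    moreover have "?J \<subseteq> L \<inter> {x. a * x \<in> ?J}"
      using JL_sub two_sided_ideal_left_mult[OF two_sided_ideal_jacobson_radical] by blast
    ultimately show ?thesis using covers_cases[OF JL] ab(2,3) by blast
  qed
  moreover have "a * (e * e - e) \<in> ?J"
  proof -
    have ae: "a * e = a - j" using je(3) by (metis add_diff_cancel_left')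
    have "a * (e * e - e) = (a * e) * e - a * e" by (simp add: right_diff_distrib mult.assoc)
    also have "\<dots> = - (j * e)" by (simp add: ae algebra_simps)
    finally show ?thesis
      using right_ideal_uminus[OF right_ideal_jacobson_radical
          right_ideal_mult[OF right_ideal_jacobson_radical je(1)]]
      by simp
  qed
  moreover have "e * e - e \<in> L" using right_ideal_diff[OF L right_ideal_mult[OF L je(2)] je(2)] .
  ultimately have "e * e - e \<in> ?J" by blast
  moreover have "e \<notin> ?J"
  proof
    assume "e \<in> ?J"
    then have "j + a * e \<in> ?J"
      using right_ideal_add[OF right_ideal_jacobson_radical je(1)]
        two_sided_ideal_left_mult[OF two_sided_ideal_jacobson_radical] by blast
    then have "a \<in> ?J" using je(3) by simp
    then show False using ab(3) right_ideal_mult[OF right_ideal_jacobson_radical] by blast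
  qed
  ultimately show ?thesis using je(2) by blast
qed

text \<open>Whichever of J and L the right ideal J + f n A equals, f n lands in J.\<close>

lemma covers_jacobson_radical_commuting_mult_mem:
  assumes JL: "covers (jacobson_radical TYPE('a::ring_1)) L" and f: "f \<in> L"
    and fn: "f * n = n * f" and nn: "n * n \<in> jacobson_radical TYPE('a)"
  shows "f * n \<in> jacobson_radical TYPE('a)"
proof -
  let ?J = "jacobson_radical TYPE('a)" and ?X = "plus_mult (jacobson_radical TYPE('a)) (f * n) UNIV"
  have J: "right_ideal ?J" by (rule right_ideal_jacobson_radical)
  have L: "right_ideal L" and JL_sub: "?J \<subseteq> L" using JL by (auto simp: covers_def)
  have "?X \<subseteq> L"
    using L JL_sub f right_ideal_mult[OF L] by (intro plus_mult_subset) (auto simp: mult.assoc)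
  then consider "?X = ?J" | "?X = L"
    using covers_cases[OF JL right_ideal_plus_mult[OF J right_ideal_UNIV]
        subset_plus_mult[OF right_ideal_UNIV]]
    by blast
  then show ?thesis
  proof cases
    case 1
    then show ?thesis using mult_mem_plus_mult[OF J, of 1 UNIV "f * n"] by simp
  next
    case 2
    then have "f \<in> ?X" using f by simp
    then obtain k d where kd: "k \<in> ?J" "f = k + f * n * d" by (rule plus_multE)
    have "n * f = n * (k + f * n * d)" using arg_cong[OF kd(2), of "(*) n"] .
    also have "\<dots> = n * k + n * n * f * d" by (simp add: distrib_left fn mult.assoc)
    also have "\<dots> \<in> ?J"
      using right_ideal_add[OF J two_sided_ideal_left_mult[OF two_sided_ideal_jacobson_radical kd(1)]
          right_ideal_mult[OF J right_ideal_mult[OF J nn]]] .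
    finally show ?thesis using fn by simp
  qed
qed

lemma jacobson_radical_completely_semiprime:
  assumes central: "\<And>e a::'a::ring_1. e * e = e \<Longrightarrow> e * a = a * e"
    and sa: "right_semi_artinian TYPE('a)"
  shows "completely_semiprime (jacobson_radical TYPE('a))"
  unfolding completely_semiprime_def
proof (intro allI impI, rule ccontr)
  let ?J = "jacobson_radical TYPE('a)"
  fix n assume nn: "n * n \<in> ?J" and n: "n \<notin> ?J"
  have J: "right_ideal ?J" by (rule right_ideal_jacobson_radical)
  have "{a. n * a \<in> ?J} \<noteq> UNIV" using n by (metis UNIV_I mem_Collect_eq mult_1_right)
  then obtain L where "covers {a. n * a \<in> ?J} L"
    using right_semi_artinian_covers[OF sa right_ideal_colon[OF J]] by blast
  then have cov: "covers ?J (plus_mult ?J n L)" by (rule covers_plus_mult_colon[OF J])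
  then obtain e where e: "e \<in> plus_mult ?J n L" "e * e - e \<in> ?J" "e \<notin> ?J"
    using covers_jacobson_radical_idempotent_mod by blast
  obtain f where f: "f * f = f" "f - e \<in> ?J"
    using right_semi_artinian_lift_idempotent[OF sa e(2)] by blast
  have L': "right_ideal (plus_mult ?J n L)" and J_L': "?J \<subseteq> plus_mult ?J n L"
    using cov by (auto simp: covers_def)
  have f_L': "f \<in> plus_mult ?J n L"
    using right_ideal_add[OF L' e(1), of "f - e"] f(2) J_L' by auto
  then have fn: "f * n \<in> ?J"
    using covers_jacobson_radical_commuting_mult_mem[OF cov _ central[OF f(1)] nn] by blast
  obtain k c where kc: "k \<in> ?J" "f = k + n * c" using f_L' by (blast elim: plus_multE)
  have "f = f * f" using f(1) by simp
  also have "\<dots> = f * (k + n * c)" using arg_cong[OF kc(2), of "(*) f"] .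
  also have "\<dots> = f * k + f * n * c" by (simp add: distrib_left mult.assoc)
  also have "\<dots> \<in> ?J"
    using right_ideal_add[OF J two_sided_ideal_left_mult[OF two_sided_ideal_jacobson_radical kc(1)]
        right_ideal_mult[OF J fn]] .
  finally have "f \<in> ?J" .
  moreover have "f \<notin> ?J" using right_ideal_diff[OF J _ f(2)] e(3) by force
  ultimately show False by blast
qed

section \<open>Maximal right ideals over a completely semiprime ideal\<close>

locale maximal_over_completely_semiprime =
  fixes M I :: "'a::ring_1 set"
  assumes maximal: "maximal_right_ideal M"
    and ideal: "two_sided_ideal I"
    and semiprime: "completely_semiprime I"
    and subset: "I \<subseteq> M"
begin

lemma right_ideal_M: "right_ideal M"
  using maximal by (simp add: maximal_right_ideal_def)

lemma one_not_mem_M: "1 \<notin> M"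
  using maximal right_ideal_eq_UNIV_if_one by (auto simp: maximal_right_ideal_def)

lemma right_ideal_I: "right_ideal I"
  using ideal by (rule two_sided_ideal_right_ideal)

lemma left_mult_I: "x \<in> I \<Longrightarrow> r * x \<in> I"
  using ideal by (rule two_sided_ideal_left_mult)

definition bound :: "'a set" where
  "bound = {a. \<forall>r. r * a \<in> M}"

lemma two_sided_ideal_bound: "two_sided_ideal bound"
proof (rule two_sided_idealI)
  show "right_ideal bound"
    unfolding right_ideal_def bound_def
    using right_ideal_M
    by (simp add: right_ideal_zero right_ideal_add right_ideal_uminus right_ideal_mult
        distrib_left flip: mult.assoc)
  show "r * x \<in> bound" if "x \<in> bound" for r x
    using that by (simp add: bound_def flip: mult.assoc)
qed

lemma bound_subset: "bound \<subseteq> M"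
  unfolding bound_def by (metis (mono_tags) mem_Collect_eq mult_1 subsetI)

lemma subset_bound: "I \<subseteq> bound"
  unfolding bound_def using subset left_mult_I by blast

lemma one_not_mem_bound: "1 \<notin> bound"
  using bound_subset one_not_mem_M by blast

lemma bound_prime:
  assumes a: "a \<notin> bound" and b: "b \<notin> bound"
  shows "\<exists>c. a * c * b \<notin> bound"
proof -
  obtain r where r: "r * b \<notin> M" using b unfolding bound_def by blast
  obtain r' where r': "r' * a \<notin> M" using a unfolding bound_def by blast
  obtain m s where ms: "m \<in> M" "m + r' * a * s = 1"
    using maximal_right_ideal_comaximal[OF maximal r'] by blast
  have "r * b = (m + r' * a * s) * (r * b)" using ms(2) by simp
  also have "\<dots> = m * (r * b) + r' * (a * (s * r) * b)" by (simp add: algebra_simps)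
  finally have "r * b = m * (r * b) + r' * (a * (s * r) * b)" .
  then have "r' * (a * (s * r) * b) \<notin> M"
    using r right_ideal_add[OF right_ideal_M right_ideal_mult[OF right_ideal_M ms(1)]] by metis
  then show ?thesis unfolding bound_def by blast
qed

definition core :: "'a set" where
  "core = {b. \<exists>s. s \<notin> bound \<and> b * s \<in> I}"

lemma coreI: "b * s \<in> I \<Longrightarrow> s \<notin> bound \<Longrightarrow> b \<in> core"
  unfolding core_def by blast

lemma coreE:
  assumes "b \<in> core"
  obtains s where "s \<notin> bound" "b * s \<in> I"
  using assms unfolding core_def by blast

lemma subset_core: "I \<subseteq> core"
  using one_not_mem_bound right_ideal_mult[OF right_ideal_I] by (auto intro: coreI)

lemma two_sided_ideal_core: "two_sided_ideal core"
proof (rule two_sided_idealI)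
  show "right_ideal core"
    unfolding right_ideal_def
  proof (intro conjI ballI allI)
    show "0 \<in> core" using subset_core right_ideal_zero[OF right_ideal_I] by blast
  next
    fix x y assume "x \<in> core" "y \<in> core"
    then obtain s t where st: "s \<notin> bound" "x * s \<in> I" "t \<notin> bound" "y * t \<in> I"
      by (metis coreE)
    obtain c where c: "s * c * t \<notin> bound" using bound_prime[OF st(1,3)] by blast
    have "x * (s * c * t) \<in> I" using right_ideal_mult[OF right_ideal_I st(2), of "c * t"]
      by (simp add: mult.assoc)
    moreover have "y * (s * c * t) \<in> I"
      using completely_semiprime_mult_insert[OF ideal semiprime st(4), of "s * c"]
      by (simp add: mult.assoc)
    ultimately have "(x + y) * (s * c * t) \<in> I" using right_ideal_add[OF right_ideal_I]
      by (simp add: distrib_right)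
    then show "x + y \<in> core" using c by (rule coreI)
  next
    fix x assume "x \<in> core"
    then obtain s where "s \<notin> bound" "x * s \<in> I" by (rule coreE)
    then show "- x \<in> core" using right_ideal_uminus[OF right_ideal_I] by (intro coreI[of _ s]) auto
  next
    fix x r assume "x \<in> core"
    then obtain s where "s \<notin> bound" "x * s \<in> I" by (rule coreE)
    then show "x * r \<in> core" using completely_semiprime_mult_insert[OF ideal semiprime]
      by (blast intro: coreI)
  qed
next
  fix r x assume "x \<in> core"
  then obtain s where "s \<notin> bound" "x * s \<in> I" by (rule coreE)
  then show "r * x \<in> core" using left_mult_I by (intro coreI[of _ s]) (auto simp: mult.assoc)
qed

lemma core_subset_bound: "core \<subseteq> bound"
proof
  fix b assume "b \<in> core"
  then obtain s where s: "s \<notin> bound" "b * s \<in> I" by (rule coreE)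
  have "b * c * s \<in> bound" for c
    using completely_semiprime_mult_insert[OF ideal semiprime s(2)] subset_bound by blast
  then show "b \<in> bound" using bound_prime s(1) by blast
qed

lemma core_cancel_left:
  assumes a: "a \<notin> bound" and ab: "a * b \<in> core"
  shows "b \<in> core"
proof -
  obtain s where s: "s \<notin> bound" "a * b * s \<in> I" using ab by (rule coreE)
  have "b * s * a \<in> I"
    using completely_semiprime_mult_commute[OF ideal semiprime, of a "b * s"] s(2)
    by (simp add: mult.assoc)
  moreover obtain c where c: "s * c * a \<notin> bound" using bound_prime[OF s(1) a] by blast
  ultimately have "b * (s * c * a) \<in> I"
    using completely_semiprime_mult_insert[OF ideal semiprime, of "b * s" a c]
    by (simp add: mult.assoc)
  then show ?thesis using c by (rule coreI)
qed

lemma core_cancel_right: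
  assumes ab: "a * b \<in> core" and b: "b \<notin> bound"
  shows "a \<in> core"
proof -
  obtain s where s: "s \<notin> bound" "a * b * s \<in> I" using ab by (rule coreE)
  obtain c where c: "b * c * s \<notin> bound" using bound_prime[OF b s(1)] by blast
  have "a * (b * c * s) \<in> I"
    using completely_semiprime_mult_insert[OF ideal semiprime s(2), of c] by (simp add: mult.assoc)
  then show ?thesis using c by (rule coreI)
qed

lemma completely_semiprime_core: "completely_semiprime core"
  unfolding completely_semiprime_def
proof (intro allI impI)
  fix u assume "u * u \<in> core"
  then obtain s where s: "s \<notin> bound" "u * u * s \<in> I" by (rule coreE)
  have "u * s * u \<in> I"
    using completely_semiprime_mult_commute[OF ideal semiprime, of u "u * s"] s(2)
    by (simp add: mult.assoc)
  then have "(u * s) * (u * s) \<in> I"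
    using right_ideal_mult[OF right_ideal_I] by (metis mult.assoc)
  then have "u * s \<in> I" using semiprime by (rule completely_semiprimeD)
  then show "u \<in> core" using s(1) by (rule coreI)
qed

text \<open>Any right ideal L covering core contains 1: picking u in L outside core, L = core + u^2 A
gives u = q + u^2 c with q in core, so u w = q for w = 1 - u c, and cancellation puts w into core.\<close>

lemma core_eq_M:
  assumes sa: "right_semi_artinian TYPE('a)"
  shows "M = core"
proof -
  have core: "right_ideal core" using two_sided_ideal_core by (rule two_sided_ideal_right_ideal)
  have core_M: "core \<subseteq> M" using core_subset_bound bound_subset by blast
  then have "core \<noteq> UNIV" using one_not_mem_M by blast
  then obtain L where L: "covers core L" using right_semi_artinian_covers[OF sa core] by blast
  then have L_ideal: "right_ideal L" by (simp add: covers_def)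
  obtain u where u: "u \<in> L" "u \<notin> core" using L by (auto simp: covers_def)
  have "u * u \<notin> core" using u(2) completely_semiprime_core by (metis completely_semiprimeD)
  then have "plus_mult core (u * u) UNIV = L"
    using covers_plus_mult_eq[OF core L right_ideal_UNIV, of "u * u" 1]
      right_ideal_mult[OF L_ideal right_ideal_mult[OF L_ideal u(1)]] by simp
  then obtain q c where qc: "q \<in> core" "u = q + u * u * c" using u(1) by (metis plus_multE)
  define w where "w = 1 - u * c"
  have uw: "u * w = q" using qc(2) unfolding w_def by (simp add: algebra_simps)
  have "w \<in> core"
  proof (cases "u \<in> bound")
    case True
    have "u * c \<in> bound" using True two_sided_ideal_bound two_sided_ideal_right_ideal right_ideal_mult
      by blast
    then have "w \<notin> bound"
      using one_not_mem_bound right_ideal_add[OF two_sided_ideal_right_ideal[OF two_sided_ideal_bound]]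
      unfolding w_def by fastforce
    then show ?thesis using core_cancel_right uw qc(1) u(2) by blast
  next
    case False
    then show ?thesis using core_cancel_left uw qc(1) by blast
  qed
  then have "w + u * c \<in> L"
    using right_ideal_add[OF L_ideal _ right_ideal_mult[OF L_ideal u(1)]] L
    by (auto simp: covers_def)
  then have "L = UNIV" using right_ideal_eq_UNIV_if_one[OF L_ideal] unfolding w_def by simp
  then show ?thesis
    using covers_cases[OF L right_ideal_M core_M] maximal by (auto simp: maximal_right_ideal_def)
qed

lemma two_sided_ideal_M: "right_semi_artinian TYPE('a) \<Longrightarrow> two_sided_ideal M"
  using core_eq_M two_sided_ideal_core by simp

end

theorem mainTheorem2:
  assumes "centrally_essential TYPE('a::ring_1)"
    and "right_semi_artinian TYPE('a) \<or> semiperfect TYPE('a)"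
  shows "right_quasi_invariant TYPE('a)"
  unfolding right_quasi_invariant_def
proof (intro allI impI)
  fix M :: "'a set" assume M: "maximal_right_ideal M"
  have central: "\<And>e a::'a. e * e = e \<Longrightarrow> e * a = a * e"
    using centrally_essential_idempotent_central[OF assms(1)] by blast
  from assms(2) show "two_sided_ideal M"
  proof
    assume sa: "right_semi_artinian TYPE('a)"
    interpret maximal_over_completely_semiprime M "jacobson_radical TYPE('a)"
      using M two_sided_ideal_jacobson_radical jacobson_radical_completely_semiprime[OF central sa]
        jacobson_radical_subset[OF M]
      by unfold_locales
    show ?thesis using sa by (rule two_sided_ideal_M)
  next
    assume sp: "semiperfect TYPE('a)"
    show ?thesis using central sp M by (rule semiperfect_maximal_right_ideal_two_sided)
  qed
qed

end
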